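(* For $0\le v\le 1$ and $a,b>0$, $$H(a,b)\le G\left(H_v(a,b),H_{1-v}(a,b)\right)\le G(a,b)$$ and $$H(a,b)\le H\left(G_v(a,b),G_{1-v}(a,b)\right)\le G(a,b).$$
   Context: For $x,y>0$ and $0\le v\le 1$: $G(x,y):=\sqrt{xy}$, $G_v(x,y):=x^{1-v}y^v$, the weighted harmonic mean $H_v(x,y):=\left\{(1-v)x^{-1}+vy^{-1}\right\}^{-1}$, and $H(x,y):=H_{1/2}(x,y)=\frac{2xy}{x+y}$. *)

theory Defs
  imports Complex_Main
begin

definition gmean :: "real \<Rightarrow> real \<Rightarrow> real" where
  "gmean x y = sqrt (x * y)"

definition wgmean :: "real \<Rightarrow> real \<Rightarrow> real \<Rightarrow> real" where
  "wgmean v x y = x powr (1 - v) * y powr v"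

definition whmean :: "real \<Rightarrow> real \<Rightarrow> real \<Rightarrow> real" where
  "whmean v x y = inverse ((1 - v) * inverse x + v * inverse y)"

definition hmean :: "real \<Rightarrow> real \<Rightarrow> real" where
  "hmean x y = 2 * x * y / (x + y)"

end

theory Submission
  imports Defs
begin

text \<open>Write \<open>u = H_v(a,b)\<close>, \<open>w = H_{1-v}(a,b)\<close>, \<open>x = G_v(a,b)\<close>, \<open>y = G_{1-v}(a,b)\<close>.
  Since \<open>1/u + 1/w = 1/a + 1/b\<close>, the pair \<open>u, w\<close> has the same harmonic mean as \<open>a, b\<close>,
  and \<open>1/u\<close>, \<open>1/w\<close> lie between \<open>1/a\<close> and \<open>1/b\<close>, so \<open>uw \<le> ab\<close>; hence
  \<open>H(a,b) = H(u,w) \<le> G(u,w) \<le> G(a,b)\<close>.  Dually \<open>xy = ab\<close>, and \<open>x, y\<close> lie between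
  \<open>a\<close> and \<open>b\<close>, so \<open>x + y \<le> a + b\<close>; as \<open>H(x,y) = 2xy/(x+y)\<close> this gives
  \<open>H(a,b) \<le> H(x,y) \<le> G(x,y) = G(a,b)\<close>.\<close>

lemma hmean_le_gmean:
  assumes "0 < x" "0 < y"
  shows "hmean x y \<le> gmean x y"
proof -
  have "2 * sqrt (x * y) \<le> x + y"
    using assms arith_geo_mean_sqrt[of x y] by simp
  then have "2 * x * y \<le> sqrt (x * y) * (x + y)"
    using assms mult_left_mono[of "2 * sqrt (x * y)" "x + y" "sqrt (x * y)"]
    by (simp add: algebra_simps)
  then show ?thesis
    using assms by (simp add: hmean_def gmean_def pos_divide_le_eq)
qed

lemma gmean_mono_mult:
  "0 \<le> x * y \<Longrightarrow> x * y \<le> a * b \<Longrightarrow> gmean x y \<le> gmean a b"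
  by (simp add: gmean_def)

lemma hmean_conv_inverse:
  "x \<noteq> 0 \<Longrightarrow> y \<noteq> 0 \<Longrightarrow> hmean x y = 2 / (inverse x + inverse y)"
  by (simp add: hmean_def field_simps)

lemma hmean_le_hmean_same_mult:
  assumes "0 < x" "0 < y" "x * y = a * b" "x + y \<le> a + b"
  shows "hmean a b \<le> hmean x y"
proof -
  have "0 < a * b"
    using assms by (metis mult_pos_pos)
  then have "2 * (a * b) / (a + b) \<le> 2 * (a * b) / (x + y)"
    using assms by (intro divide_left_mono) auto
  then show ?thesis
    using assms(3) by (simp add: hmean_def mult.assoc)
qed

lemma weighted_sum_pos:
  fixes v p q :: real
  assumes "0 \<le> v" "v \<le> 1" "0 < p" "0 < q"
  shows "0 < (1 - v) * p + v * q"
proof (cases "v = 0")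
  case False
  then have "0 < v * q" using assms by simp
  moreover have "0 \<le> (1 - v) * p" using assms by simp
  ultimately show ?thesis by linarith
qed (use assms in simp)

lemma whmean_pos:
  "0 \<le> v \<Longrightarrow> v \<le> 1 \<Longrightarrow> 0 < a \<Longrightarrow> 0 < b \<Longrightarrow> 0 < whmean v a b"
  unfolding whmean_def by (intro positive_imp_inverse_positive weighted_sum_pos) auto

lemma hmean_whmean_complement:
  assumes "0 \<le> v" "v \<le> 1" "0 < a" "0 < b"
  shows "hmean (whmean v a b) (whmean (1 - v) a b) = hmean a b"
proof -
  have "inverse (whmean v a b) + inverse (whmean (1 - v) a b) = inverse a + inverse b"
    by (simp add: whmean_def algebra_simps)
  then show ?thesis
    using assms whmean_pos[of v a b] whmean_pos[of "1 - v" a b]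
    by (simp add: hmean_conv_inverse)
qed

lemma weighted_sum_mult_complement:
  fixes v p q :: real
  shows "((1 - v) * p + v * q) * (v * p + (1 - v) * q) = p * q + v * (1 - v) * (p - q)\<^sup>2"
  by (simp add: algebra_simps power2_eq_square)

lemma whmean_mult_complement_le:
  assumes "0 \<le> v" "v \<le> 1" "0 < a" "0 < b"
  shows "whmean v a b * whmean (1 - v) a b \<le> a * b"
proof -
  have "inverse (a * b) = inverse a * inverse b"
    by (rule inverse_mult_distrib)
  also have "\<dots> \<le> ((1 - v) * inverse a + v * inverse b) * (v * inverse a + (1 - v) * inverse b)"
    unfolding weighted_sum_mult_complement using assms by simp
  also have "\<dots> = inverse (whmean v a b * whmean (1 - v) a b)"
    by (simp add: whmean_def inverse_mult_distrib)
  finally show ?thesis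
    using assms whmean_pos[of v a b] whmean_pos[of "1 - v" a b]
    by (subst (asm) inverse_le_iff_le) auto
qed

lemma wgmean_pos: "0 < a \<Longrightarrow> 0 < b \<Longrightarrow> 0 < wgmean v a b"
  by (simp add: wgmean_def)

lemma wgmean_mult_complement:
  assumes "0 < a" "0 < b"
  shows "wgmean v a b * wgmean (1 - v) a b = a * b"
proof -
  have "wgmean v a b * wgmean (1 - v) a b
          = (a powr (1 - v) * a powr v) * (b powr v * b powr (1 - v))"
    by (simp add: wgmean_def algebra_simps)
  also have "\<dots> = a * b"
    using assms by (simp add: powr_add[symmetric])
  finally show ?thesis .
qed

lemma wgmean_add_complement_le:
  assumes "0 \<le> v" "v \<le> 1" "0 < a" "0 < b"
  shows "wgmean v a b + wgmean (1 - v) a b \<le> a + b"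
proof -
  have "a + b - (wgmean v a b + wgmean (1 - v) a b)
          = (a powr (1 - v) - b powr (1 - v)) * (a powr v - b powr v)"
  proof -
    have "a = a powr (1 - v) * a powr v" "b = b powr (1 - v) * b powr v"
      using assms by (simp_all add: powr_add[symmetric])
    then show ?thesis
      by (simp add: wgmean_def algebra_simps)
  qed
  moreover have "0 \<le> (a powr (1 - v) - b powr (1 - v)) * (a powr v - b powr v)"
  proof (cases "a \<le> b")
    case True
    then have "a powr (1 - v) \<le> b powr (1 - v)" "a powr v \<le> b powr v"
      using assms by (auto intro!: powr_mono2)
    then show ?thesis by (simp add: mult_nonpos_nonpos)
  next
    case False
    then have "b powr (1 - v) \<le> a powr (1 - v)" "b powr v \<le> a powr v"
      using assms by (auto intro!: powr_mono2)
    then show ?thesis by simp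
  qed
  ultimately show ?thesis by linarith
qed

theorem proposition2p9:
  fixes a b v :: real
  assumes "0 \<le> v" and "v \<le> 1" and "0 < a" and "0 < b"
  shows "hmean a b \<le> gmean (whmean v a b) (whmean (1 - v) a b)
         \<and> gmean (whmean v a b) (whmean (1 - v) a b) \<le> gmean a b
         \<and> hmean a b \<le> hmean (wgmean v a b) (wgmean (1 - v) a b)
         \<and> hmean (wgmean v a b) (wgmean (1 - v) a b) \<le> gmean a b"
proof (intro conjI)
  have u: "0 < whmean v a b" and w: "0 < whmean (1 - v) a b"
    using assms by (simp_all add: whmean_pos)
  have x: "0 < wgmean v a b" and y: "0 < wgmean (1 - v) a b"
    using assms by (simp_all add: wgmean_pos)
  show "hmean a b \<le> gmean (whmean v a b) (whmean (1 - v) a b)"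
    using hmean_le_gmean[OF u w] hmean_whmean_complement[OF assms] by simp
  show "gmean (whmean v a b) (whmean (1 - v) a b) \<le> gmean a b"
    using u w whmean_mult_complement_le[OF assms] by (simp add: gmean_mono_mult)
  show "hmean a b \<le> hmean (wgmean v a b) (wgmean (1 - v) a b)"
    using x y assms by (intro hmean_le_hmean_same_mult wgmean_mult_complement wgmean_add_complement_le)
  show "hmean (wgmean v a b) (wgmean (1 - v) a b) \<le> gmean a b"
    using hmean_le_gmean[OF x y] wgmean_mult_complement[OF assms(3,4)] by (simp add: gmean_def)
qed

end
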